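(* Let $\mathcal{X}=\{1,\dots,n\}$ with $n\geq2$, let $\pi$ be a strictly positive probability distribution on $\mathcal{X}$, let $P$ be an ergodic $\pi$-reversible transition matrix, and let $\alpha\in[0,1]$. Let $\mathcal{A}=\{S\subset\mathcal{X}:0<\pi(S)\leq 1/2\}$ and $h(S)=\frac{1}{\pi(S)}\sum_{x\in S,\,y\in S'}\pi(x)P(x,y)$. Let $U^*=\{x^*\}$ be a singleton with $U^*\in\operatorname*{argmax}_{S\in\mathcal{A}}h(S)$, and let $S^*\in\operatorname*{argmin}_{S\in\mathcal{A}}\|A_\alpha(S)-\Pi\|_{F,\pi}^2$. Then $$0\leq\|A_\alpha(U^* )-\Pi\|_{F,\pi}^2-\|A_\alpha(S^* )-\Pi\|_{F,\pi}^2\leq 2\alpha(1-\alpha).$$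
   Context: $S'=\mathcal{X}\setminus S$. $\pi$-reversible means $\pi(x)P(x,y)=\pi(y)P(y,x)$. For $S\neq\emptyset,\mathcal{X}$, $A_\alpha(S)=\alpha P+(1-\alpha)G_S$ where $G_S$ is the Gibbs kernel of the partition $\mathcal{X}=S\sqcup S'$: $G_S(x,y)=\pi(y)/\pi(\mathcal{O}(x))$ if $y\in\mathcal{O}(x)$ and $0$ otherwise, $\mathcal{O}(x)\in\{S,S'\}$ the block containing $x$. $\Pi$ is the matrix with every row equal to $\pi$; $\|M\|_{F,\pi}^2=\operatorname{Tr}(M^*M)$ with $M^*(x,y)=\pi(y)M(y,x)/\pi(x)$. *)

theory Defs
  imports Main "HOL-Analysis.Analysis"
begin

text \<open>State space: a finite type 'a (n = CARD('a)). Matrices are functions 'a => 'a => real.\<close>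

definition pmeas :: "('a \<Rightarrow> real) \<Rightarrow> 'a set \<Rightarrow> real" where
  "pmeas \<pi> S = (\<Sum>x\<in>S. \<pi> x)"

definition mmult :: "('a::finite \<Rightarrow> 'a \<Rightarrow> real) \<Rightarrow> ('a \<Rightarrow> 'a \<Rightarrow> real) \<Rightarrow> ('a \<Rightarrow> 'a \<Rightarrow> real)" where
  "mmult M N = (\<lambda>x y. \<Sum>z\<in>UNIV. M x z * N z y)"

fun mpow :: "('a::finite \<Rightarrow> 'a \<Rightarrow> real) \<Rightarrow> nat \<Rightarrow> ('a \<Rightarrow> 'a \<Rightarrow> real)" where
  "mpow M 0 = (\<lambda>x y. if x = y then 1 else 0)"
| "mpow M (Suc k) = mmult (mpow M k) M"

definition prob_dist_pos :: "('a::finite \<Rightarrow> real) \<Rightarrow> bool" where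
  "prob_dist_pos \<pi> \<longleftrightarrow> (\<forall>x. \<pi> x > 0) \<and> (\<Sum>x\<in>UNIV. \<pi> x) = 1"

definition stochastic :: "('a::finite \<Rightarrow> 'a \<Rightarrow> real) \<Rightarrow> bool" where
  "stochastic P \<longleftrightarrow> (\<forall>x y. P x y \<ge> 0) \<and> (\<forall>x. (\<Sum>y\<in>UNIV. P x y) = 1)"

text \<open>Ergodic (finite chain): irreducible and aperiodic, i.e. some power is entrywise positive.\<close>
definition ergodic :: "('a::finite \<Rightarrow> 'a \<Rightarrow> real) \<Rightarrow> bool" where
  "ergodic P \<longleftrightarrow> (\<exists>k. \<forall>x y. mpow P k x y > 0)"

definition reversible :: "('a \<Rightarrow> real) \<Rightarrow> ('a \<Rightarrow> 'a \<Rightarrow> real) \<Rightarrow> bool" where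
  "reversible \<pi> P \<longleftrightarrow> (\<forall>x y. \<pi> x * P x y = \<pi> y * P y x)"

definition gibbs :: "('a \<Rightarrow> real) \<Rightarrow> 'a set \<Rightarrow> ('a \<Rightarrow> 'a \<Rightarrow> real)" where
  "gibbs \<pi> S = (\<lambda>x y. let B = (if x \<in> S then S else - S) in
                        if y \<in> B then \<pi> y / pmeas \<pi> B else 0)"

definition Amat :: "('a \<Rightarrow> real) \<Rightarrow> ('a \<Rightarrow> 'a \<Rightarrow> real) \<Rightarrow> real \<Rightarrow> 'a set \<Rightarrow> ('a \<Rightarrow> 'a \<Rightarrow> real)" where
  "Amat \<pi> P \<alpha> S = (\<lambda>x y. \<alpha> * P x y + (1 - \<alpha>) * gibbs \<pi> S x y)"

definition PiMat :: "('a \<Rightarrow> real) \<Rightarrow> ('a \<Rightarrow> 'a \<Rightarrow> real)" where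
  "PiMat \<pi> = (\<lambda>x y. \<pi> y)"

definition adjoint :: "('a \<Rightarrow> real) \<Rightarrow> ('a \<Rightarrow> 'a \<Rightarrow> real) \<Rightarrow> ('a \<Rightarrow> 'a \<Rightarrow> real)" where
  "adjoint \<pi> M = (\<lambda>x y. \<pi> y * M y x / \<pi> x)"

definition trace :: "('a::finite \<Rightarrow> 'a \<Rightarrow> real) \<Rightarrow> real" where
  "trace M = (\<Sum>x\<in>UNIV. M x x)"

definition frob_sq :: "('a::finite \<Rightarrow> real) \<Rightarrow> ('a \<Rightarrow> 'a \<Rightarrow> real) \<Rightarrow> real" where
  "frob_sq \<pi> M = trace (mmult (adjoint \<pi> M) M)"

definition admissible :: "('a::finite \<Rightarrow> real) \<Rightarrow> 'a set set" where
  "admissible \<pi> = {S. 0 < pmeas \<pi> S \<and> pmeas \<pi> S \<le> 1/2}"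

definition cheeger_ratio :: "('a::finite \<Rightarrow> real) \<Rightarrow> ('a \<Rightarrow> 'a \<Rightarrow> real) \<Rightarrow> 'a set \<Rightarrow> real" where
  "cheeger_ratio \<pi> P S = (\<Sum>x\<in>S. \<Sum>y\<in>-S. \<pi> x * P x y) / pmeas \<pi> S"

end

(* With the inner product <M, N> = Tr(M^* N) of L^2(pi), for which frob_sq is the squared norm,
   A_alpha(S) - Pi = alpha (P - Pi) + (1 - alpha) (G_S - Pi).  Since P and G_S are stochastic,
   subtracting Pi lowers every inner product among them by 1, and <G_S, G_S> = 2 while
   <P, G_S> = 2 - h(S) - h(S').  Hence
     ||A_alpha(S) - Pi||^2 = alpha^2 ||P - Pi||^2 + (1 - alpha)^2 + 2 alpha (1 - alpha) (1 - h(S) - h(S')),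
   and only the last term depends on S.  For pi(S) <= 1/2 reversibility gives h(S') <= h(S), and
   h(S) <= 1 as well as h(S) <= h(U) for the Cheeger-optimal U = {x_star}; so
   h(S) + h(S') - h(U) - h(U') <= 1. *)

theory Submission imports Defs begin

definition frob_inner ::
    "('a::finite \<Rightarrow> real) \<Rightarrow> ('a \<Rightarrow> 'a \<Rightarrow> real) \<Rightarrow> ('a \<Rightarrow> 'a \<Rightarrow> real) \<Rightarrow> real" where
  "frob_inner \<pi> M N = (\<Sum>x\<in>UNIV. \<Sum>y\<in>UNIV. \<pi> x * M x y * N x y / \<pi> y)"

definition flow :: "('a::finite \<Rightarrow> real) \<Rightarrow> ('a \<Rightarrow> 'a \<Rightarrow> real) \<Rightarrow> 'a set \<Rightarrow> 'a set \<Rightarrow> real" where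
  "flow \<pi> M S T = (\<Sum>x\<in>S. \<Sum>y\<in>T. \<pi> x * M x y)"

lemma trace_mmult_adjoint: "trace (mmult (adjoint \<pi> M) N) = frob_inner \<pi> M N"
  unfolding trace_def mmult_def adjoint_def frob_inner_def
  by (subst sum.swap) (simp add: mult.assoc mult.left_commute)

lemma frob_sq_eq_frob_inner: "frob_sq \<pi> M = frob_inner \<pi> M M"
  by (simp add: frob_sq_def trace_mmult_adjoint)

lemma frob_inner_combination_self:
  "frob_inner \<pi> (\<lambda>x y. a * M x y + b * N x y) (\<lambda>x y. a * M x y + b * N x y)
     = a\<^sup>2 * frob_inner \<pi> M M + 2 * a * b * frob_inner \<pi> M N + b\<^sup>2 * frob_inner \<pi> N N"
  unfolding frob_inner_def
  by (simp add: sum.distrib sum_distrib_left power2_eq_square add_divide_distrib algebra_simps)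

lemma sum_compl_split:
  fixes f :: "'a::finite \<Rightarrow> 'b::comm_monoid_add"
  shows "sum f UNIV = sum f S + sum f (- S)"
  by (metis Compl_disjoint finite sum.union_disjoint boolean_algebra_class.sup_compl_top)

lemma pmeas_compl:
  fixes \<pi> :: "'a::finite \<Rightarrow> real"
  shows "sum \<pi> UNIV = 1 \<Longrightarrow> pmeas \<pi> (- S) = 1 - pmeas \<pi> S"
  using sum_compl_split[of \<pi> S] by (simp add: pmeas_def)

lemma flow_compl_right:
  assumes "\<forall>x. sum (M x) UNIV = 1"
  shows "flow \<pi> M S (- T) = pmeas \<pi> S - flow \<pi> M S T"
proof -
  have "(\<Sum>y\<in>-T. \<pi> x * M x y) + (\<Sum>y\<in>T. \<pi> x * M x y) = \<pi> x" for x
    using sum_compl_split[of "M x" T] assms by (simp flip: sum_distrib_left distrib_left)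
  then have "flow \<pi> M S (- T) + flow \<pi> M S T = pmeas \<pi> S"
    by (simp add: flow_def pmeas_def flip: sum.distrib)
  then show ?thesis
    by simp
qed

lemma flow_swap: "reversible \<pi> P \<Longrightarrow> flow \<pi> P S T = flow \<pi> P T S"
  unfolding flow_def reversible_def by (subst sum.swap) simp

lemma cheeger_ratio_eq_flow: "cheeger_ratio \<pi> P S = flow \<pi> P S (- S) / pmeas \<pi> S"
  by (simp add: cheeger_ratio_def flow_def)

lemma cheeger_ratio_nonneg:
  assumes "prob_dist_pos \<pi>" and "stochastic P"
  shows "0 \<le> cheeger_ratio \<pi> P S"
  using assms unfolding cheeger_ratio_def pmeas_def prob_dist_pos_def stochastic_def
  by (intro divide_nonneg_nonneg sum_nonneg mult_nonneg_nonneg) (auto intro: less_imp_le)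

lemma cheeger_ratio_le_one:
  assumes "prob_dist_pos \<pi>" and "stochastic P"
  shows "cheeger_ratio \<pi> P S \<le> 1"
proof -
  have "0 \<le> flow \<pi> P S S"
    using assms unfolding flow_def prob_dist_pos_def stochastic_def
    by (intro sum_nonneg mult_nonneg_nonneg) (auto intro: less_imp_le)
  moreover have "flow \<pi> P S (- S) = pmeas \<pi> S - flow \<pi> P S S"
    using assms(2) by (intro flow_compl_right) (simp add: stochastic_def)
  moreover have "0 \<le> pmeas \<pi> S"
    using assms(1) unfolding pmeas_def prob_dist_pos_def by (intro sum_nonneg) (auto intro: less_imp_le)
  ultimately show ?thesis
    by (auto simp: cheeger_ratio_eq_flow divide_le_eq_1)
qed

lemma cheeger_ratio_compl_le:
  assumes "prob_dist_pos \<pi>" and "stochastic P" and "reversible \<pi> P"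
    and "0 < pmeas \<pi> S" and "pmeas \<pi> S \<le> 1/2"
  shows "cheeger_ratio \<pi> P (- S) \<le> cheeger_ratio \<pi> P S"
proof -
  have "pmeas \<pi> (- S) = 1 - pmeas \<pi> S"
    using assms(1) by (intro pmeas_compl) (simp add: prob_dist_pos_def)
  moreover have "flow \<pi> P (- S) S = flow \<pi> P S (- S)"
    using assms(3) by (rule flow_swap)
  moreover have "0 \<le> flow \<pi> P S (- S)"
    using cheeger_ratio_nonneg[OF assms(1,2), of S] assms(4)
    by (simp add: cheeger_ratio_eq_flow zero_le_divide_iff)
  ultimately show ?thesis
    using assms(4,5) by (simp add: cheeger_ratio_eq_flow divide_left_mono)
qed

lemma gibbs_compl: "gibbs \<pi> (- S) = gibbs \<pi> S"
  by (auto simp: gibbs_def fun_eq_iff)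

lemma gibbs_in_block: "x \<in> S \<Longrightarrow> gibbs \<pi> S x y = (if y \<in> S then \<pi> y / pmeas \<pi> S else 0)"
  by (simp add: gibbs_def)

lemma gibbs_row_sum:
  fixes \<pi> :: "'a::finite \<Rightarrow> real"
  assumes "pmeas \<pi> S \<noteq> 0" and "pmeas \<pi> (- S) \<noteq> 0"
  shows "sum (gibbs \<pi> S x) UNIV = 1"
proof -
  have block: "sum (gibbs \<pi> T x) UNIV = 1" if "x \<in> T" "pmeas \<pi> T \<noteq> 0" for T
    using that by (simp add: gibbs_in_block sum.If_cases pmeas_def flip: sum_divide_distrib)
  show ?thesis
    using block[of S] block[of "- S"] assms by (cases "x \<in> S") (simp_all add: gibbs_compl)
qed

lemma flow_gibbs_diag:
  fixes \<pi> :: "'a::finite \<Rightarrow> real"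
  assumes "pmeas \<pi> S \<noteq> 0"
  shows "flow \<pi> (gibbs \<pi> S) S S = pmeas \<pi> S"
proof -
  have "flow \<pi> (gibbs \<pi> S) S S = (\<Sum>x\<in>S. \<pi> x * (\<Sum>y\<in>S. \<pi> y) / pmeas \<pi> S)"
    unfolding flow_def
    by (intro sum.cong refl) (simp add: gibbs_in_block sum_distrib_left sum_divide_distrib)
  also have "\<dots> = pmeas \<pi> S"
    using assms by (simp add: pmeas_def flip: sum_divide_distrib sum_distrib_right)
  finally show ?thesis .
qed

lemma frob_inner_gibbs_right:
  fixes \<pi> :: "'a::finite \<Rightarrow> real"
  assumes "\<forall>y. \<pi> y \<noteq> 0"
  shows "frob_inner \<pi> M (gibbs \<pi> S)
           = flow \<pi> M S S / pmeas \<pi> S + flow \<pi> M (- S) (- S) / pmeas \<pi> (- S)"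
proof -
  have row: "(\<Sum>y\<in>UNIV. \<pi> x * M x y * gibbs \<pi> T x y / \<pi> y)
               = (\<Sum>y\<in>T. \<pi> x * M x y) / pmeas \<pi> T"
    if "x \<in> T" for x T
  proof -
    have "\<pi> x * M x y * gibbs \<pi> T x y / \<pi> y
            = (if y \<in> T then \<pi> x * M x y / pmeas \<pi> T else 0)" for y
      using that assms by (simp add: gibbs_in_block)
    then show ?thesis
      by (simp add: sum.If_cases sum_divide_distrib)
  qed
  have "frob_inner \<pi> M (gibbs \<pi> S)
          = (\<Sum>x\<in>S. \<Sum>y\<in>UNIV. \<pi> x * M x y * gibbs \<pi> S x y / \<pi> y)
            + (\<Sum>x\<in>- S. \<Sum>y\<in>UNIV. \<pi> x * M x y * gibbs \<pi> (- S) x y / \<pi> y)"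
    unfolding frob_inner_def gibbs_compl by (rule sum_compl_split)
  also have "\<dots> = flow \<pi> M S S / pmeas \<pi> S + flow \<pi> M (- S) (- S) / pmeas \<pi> (- S)"
    by (simp add: row flow_def sum_divide_distrib)
  finally show ?thesis .
qed

lemma frob_inner_minus_PiMat:
  fixes \<pi> :: "'a::finite \<Rightarrow> real"
  assumes "\<forall>y. \<pi> y \<noteq> 0" and "sum \<pi> UNIV = 1"
    and "\<forall>x. sum (M x) UNIV = 1" and "\<forall>x. sum (N x) UNIV = 1"
  shows "frob_inner \<pi> (\<lambda>x y. M x y - PiMat \<pi> x y) (\<lambda>x y. N x y - PiMat \<pi> x y)
           = frob_inner \<pi> M N - 1"
proof -
  have "(\<Sum>y\<in>UNIV. \<pi> x * (M x y - \<pi> y) * (N x y - \<pi> y) / \<pi> y)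
          = (\<Sum>y\<in>UNIV. \<pi> x * M x y * N x y / \<pi> y) - \<pi> x" for x
  proof -
    have "\<pi> x * (M x y - \<pi> y) * (N x y - \<pi> y) / \<pi> y
            = \<pi> x * M x y * N x y / \<pi> y - \<pi> x * M x y - \<pi> x * N x y + \<pi> x * \<pi> y" for y
      using assms(1) by (simp add: field_simps)
    then show ?thesis
      using assms by (simp add: sum.distrib sum_subtractf flip: sum_distrib_left)
  qed
  then show ?thesis
    using assms(2) by (simp add: frob_inner_def PiMat_def sum_subtractf)
qed

lemma frob_sq_Amat_minus_PiMat:
  fixes \<pi> :: "'a::finite \<Rightarrow> real"
  assumes "prob_dist_pos \<pi>" and "stochastic P" and "0 < pmeas \<pi> S" and "pmeas \<pi> S < 1"
  shows "frob_sq \<pi> (\<lambda>x y. Amat \<pi> P \<alpha> S x y - PiMat \<pi> x y)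
           = \<alpha>\<^sup>2 * frob_sq \<pi> (\<lambda>x y. P x y - PiMat \<pi> x y) + (1 - \<alpha>)\<^sup>2
             + 2 * \<alpha> * (1 - \<alpha>) * (1 - cheeger_ratio \<pi> P S - cheeger_ratio \<pi> P (- S))"
proof -
  define G where "G = gibbs \<pi> S"
  define D where "D M = (\<lambda>x y. M x y - PiMat \<pi> x y)" for M :: "'a \<Rightarrow> 'a \<Rightarrow> real"
  have \<pi>_nonzero: "\<forall>y. \<pi> y \<noteq> 0" and \<pi>_sum: "sum \<pi> UNIV = 1"
    using assms(1) by (auto simp: prob_dist_pos_def dest: less_imp_neq[symmetric])
  have P_rows: "\<forall>x. sum (P x) UNIV = 1"
    using assms(2) by (simp add: stochastic_def)
  have compl: "pmeas \<pi> (- S) = 1 - pmeas \<pi> S"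
    using \<pi>_sum by (rule pmeas_compl)
  then have G_rows: "\<forall>x. sum (G x) UNIV = 1"
    using assms(3,4) by (simp add: G_def gibbs_row_sum)
  have "frob_inner \<pi> G G = 2"
    using frob_inner_gibbs_right[OF \<pi>_nonzero, of G S] flow_gibbs_diag[of \<pi> S]
      flow_gibbs_diag[of \<pi> "- S"] compl assms(3,4)
    by (simp add: G_def gibbs_compl)
  then have GG: "frob_inner \<pi> (D G) (D G) = 1"
    unfolding D_def using frob_inner_minus_PiMat[OF \<pi>_nonzero \<pi>_sum G_rows G_rows] by simp
  have "frob_inner \<pi> P G = flow \<pi> P S S / pmeas \<pi> S + flow \<pi> P (- S) (- S) / pmeas \<pi> (- S)"
    unfolding G_def using \<pi>_nonzero by (rule frob_inner_gibbs_right)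
  also have "\<dots> = (pmeas \<pi> S - flow \<pi> P S (- S)) / pmeas \<pi> S
                   + (pmeas \<pi> (- S) - flow \<pi> P (- S) S) / pmeas \<pi> (- S)"
    using flow_compl_right[OF P_rows, of \<pi> S "- S"] flow_compl_right[OF P_rows, of \<pi> "- S" S]
    by simp
  also have "\<dots> = 2 - cheeger_ratio \<pi> P S - cheeger_ratio \<pi> P (- S)"
    using compl assms(3,4) by (simp add: cheeger_ratio_eq_flow diff_divide_distrib)
  finally have "frob_inner \<pi> P G = 2 - cheeger_ratio \<pi> P S - cheeger_ratio \<pi> P (- S)" .
  then have PG: "frob_inner \<pi> (D P) (D G) = 1 - cheeger_ratio \<pi> P S - cheeger_ratio \<pi> P (- S)"
    unfolding D_def using frob_inner_minus_PiMat[OF \<pi>_nonzero \<pi>_sum P_rows G_rows] by simp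
  have A: "(\<lambda>x y. Amat \<pi> P \<alpha> S x y - PiMat \<pi> x y)
             = (\<lambda>x y. \<alpha> * D P x y + (1 - \<alpha>) * D G x y)"
    by (simp add: D_def G_def Amat_def PiMat_def algebra_simps)
  show ?thesis
    unfolding A frob_sq_eq_frob_inner frob_inner_combination_self GG PG by (simp add: D_def)
qed

theorem proposition4p8:
  fixes \<pi> :: "'a::finite \<Rightarrow> real" and P :: "'a \<Rightarrow> 'a \<Rightarrow> real"
    and \<alpha> :: real and xs :: 'a and Ss :: "'a set"
  assumes "CARD('a) \<ge> 2"
    and "prob_dist_pos \<pi>"
    and "stochastic P" and "ergodic P" and "reversible \<pi> P"
    and "0 \<le> \<alpha>" and "\<alpha> \<le> 1"
    and "{xs} \<in> admissible \<pi>"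
    and "\<forall>S\<in>admissible \<pi>. cheeger_ratio \<pi> P S \<le> cheeger_ratio \<pi> P {xs}"
    and "Ss \<in> admissible \<pi>"
    and "\<forall>S\<in>admissible \<pi>.
           frob_sq \<pi> (\<lambda>x y. Amat \<pi> P \<alpha> Ss x y - PiMat \<pi> x y)
             \<le> frob_sq \<pi> (\<lambda>x y. Amat \<pi> P \<alpha> S x y - PiMat \<pi> x y)"
  shows "0 \<le> frob_sq \<pi> (\<lambda>x y. Amat \<pi> P \<alpha> {xs} x y - PiMat \<pi> x y)
              - frob_sq \<pi> (\<lambda>x y. Amat \<pi> P \<alpha> Ss x y - PiMat \<pi> x y)
       \<and> frob_sq \<pi> (\<lambda>x y. Amat \<pi> P \<alpha> {xs} x y - PiMat \<pi> x y)
              - frob_sq \<pi> (\<lambda>x y. Amat \<pi> P \<alpha> Ss x y - PiMat \<pi> x y) \<le> 2 * \<alpha> * (1 - \<alpha>)"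
proof
  show "0 \<le> frob_sq \<pi> (\<lambda>x y. Amat \<pi> P \<alpha> {xs} x y - PiMat \<pi> x y)
              - frob_sq \<pi> (\<lambda>x y. Amat \<pi> P \<alpha> Ss x y - PiMat \<pi> x y)"
    using assms(8,11) by auto
  define h where "h = cheeger_ratio \<pi> P"
  have formula: "frob_sq \<pi> (\<lambda>x y. Amat \<pi> P \<alpha> S x y - PiMat \<pi> x y)
      = \<alpha>\<^sup>2 * frob_sq \<pi> (\<lambda>x y. P x y - PiMat \<pi> x y) + (1 - \<alpha>)\<^sup>2
        + 2 * \<alpha> * (1 - \<alpha>) * (1 - h S - h (- S))" if "S \<in> admissible \<pi>" for S
    using frob_sq_Amat_minus_PiMat[OF assms(2,3)] that by (simp add: admissible_def h_def)
  have "h Ss + h (- Ss) \<le> 1 + h {xs} + h (- {xs})"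
    using cheeger_ratio_compl_le[OF assms(2,3,5), of Ss] cheeger_ratio_le_one[OF assms(2,3), of Ss]
      cheeger_ratio_nonneg[OF assms(2,3), of "- {xs}"] assms(9,10)
    by (auto simp: admissible_def h_def)
  moreover have "0 \<le> 2 * \<alpha> * (1 - \<alpha>)"
    using assms(6,7) by simp
  ultimately show "frob_sq \<pi> (\<lambda>x y. Amat \<pi> P \<alpha> {xs} x y - PiMat \<pi> x y)
              - frob_sq \<pi> (\<lambda>x y. Amat \<pi> P \<alpha> Ss x y - PiMat \<pi> x y) \<le> 2 * \<alpha> * (1 - \<alpha>)"
    using mult_left_mono[of "h Ss + h (- Ss) - h {xs} - h (- {xs})" 1 "2 * \<alpha> * (1 - \<alpha>)"]
    by (simp add: formula assms(8,10) algebra_simps)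
qed

end
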